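(* Let $A$ and $B$ be two $n\times n$ generalized tournament matrices with the same principal minors of orders at most $4$. Then $A$ is inseparable if and only if $B$ is inseparable.
   Context: A generalized tournament matrix of order $n$ is a real $n\times n$ matrix $M=(m_{ij})$ with nonnegative entries satisfying $M+M^{t}=J_n-I_n$. Write $[n]=\{1,\ldots,n\}$. A clan of $M$ is a subset $X\subseteq[n]$ such that for all $i,j\in X$ and $k\in[n]\setminus X$, $m_{ik}=m_{jk}$ and $m_{ki}=m_{kj}$. $M$ is separable if $[n]$ can be partitioned into two nonempty clans, and inseparable otherwise. *)

theory Defs
  imports "Jordan_Normal_Form.Determinant" "Jordan_Normal_Form.DL_Submatrix"
begin

text \<open>Matrices are JNF matrices with indices 0..<n (so [n] is rendered as {0..<n}).\<close>

definition gen_tournament :: "nat \<Rightarrow> real mat \<Rightarrow> bool" where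
  "gen_tournament n M \<longleftrightarrow> M \<in> carrier_mat n n
     \<and> (\<forall>i<n. \<forall>j<n. M $$ (i,j) \<ge> 0)
     \<and> M + transpose_mat M = mat n n (\<lambda>(i,j). if i = j then 0 else 1)"

definition clan :: "nat \<Rightarrow> real mat \<Rightarrow> nat set \<Rightarrow> bool" where
  "clan n M X \<longleftrightarrow> X \<subseteq> {0..<n}
     \<and> (\<forall>i\<in>X. \<forall>j\<in>X. \<forall>k\<in>{0..<n} - X.
          M $$ (i,k) = M $$ (j,k) \<and> M $$ (k,i) = M $$ (k,j))"

definition separable :: "nat \<Rightarrow> real mat \<Rightarrow> bool" where
  "separable n M \<longleftrightarrow> (\<exists>X Y. X \<noteq> {} \<and> Y \<noteq> {} \<and> X \<inter> Y = {} \<and> X \<union> Y = {0..<n}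
     \<and> clan n M X \<and> clan n M Y)"

definition inseparable :: "nat \<Rightarrow> real mat \<Rightarrow> bool" where
  "inseparable n M \<longleftrightarrow> \<not> separable n M"

definition principal_minor :: "real mat \<Rightarrow> nat set \<Rightarrow> real" where
  "principal_minor M S = det (submatrix M S S)"

end

theory Submission
  imports Defs
begin

text \<open>If A is separable, every entry of A from a clan X to its complement Y equals one
  constant c. Equal principal minors of order 2 force the corresponding entries of B into
  {c, 1 - c}; equal minors of order 3 then pin down the entries of B inside X and inside Y
  wherever a row of B switches between c and 1 - c. With these constraints the sets
  N x = {y \<in> Y. B(x,y) = c} form a chain, and either some row of X has all its entries c
  against Y or some column of Y avoids c entirely; in both cases the rows (resp. columns) of
  that kind form one side of a constant cut of B, i.e. a separation.\<close>

lemma det_mat_2: "det (mat 2 2 f) = (f (0,0) * f (1,1) - f (0,1) * f (1,0) :: 'a :: comm_ring_1)"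
  by (subst laplace_expansion_column[where j=0 and n=2])
     (auto simp: cofactor_def mat_delete_def det_single numeral_2_eq_2)

lemma det_mat_3:
  "det (mat 3 3 f) =
     (f (0,0) * f (1,1) * f (2,2) - f (0,0) * f (1,2) * f (2,1) - f (1,0) * f (0,1) * f (2,2)
      + f (1,0) * f (0,2) * f (2,1) + f (2,0) * f (0,1) * f (1,2) - f (2,0) * f (0,2) * f (1,1)
      :: 'a :: comm_ring_1)"
  by (subst laplace_expansion_column[where j=0 and n=3])
     (auto simp: cofactor_def mat_delete_def det_mat_2[unfolded numeral_2_eq_2]
        numeral_3_eq_3 numeral_2_eq_2 algebra_simps)

lemma pick_pair:
  assumes "i < j"
  shows "pick {i,j} 0 = i" "pick {i,j} (Suc 0) = j"
proof -
  show i: "pick {i,j} 0 = i"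
    by (auto intro!: Least_equality simp: assms less_imp_le)
  show "pick {i,j} (Suc 0) = j"
    unfolding pick.simps(2) i using assms by (auto intro!: Least_equality)
qed

lemma pick_triple:
  assumes "i < j" "j < k"
  shows "pick {i,j,k} 0 = i" "pick {i,j,k} (Suc 0) = j" "pick {i,j,k} (Suc (Suc 0)) = k"
proof -
  show i: "pick {i,j,k} 0 = i"
    using assms by (auto intro!: Least_equality)
  show j: "pick {i,j,k} (Suc 0) = j"
    unfolding pick.simps(2) i using assms by (auto intro!: Least_equality)
  show "pick {i,j,k} (Suc (Suc 0)) = k"
    unfolding pick.simps(2)[of _ "Suc 0"] j using assms
    by (auto intro!: Least_equality)
qed

lemma submatrix_pair:
  assumes "M \<in> carrier_mat n n" "i < j" "j < n"
  shows "submatrix M {i,j} {i,j} = mat 2 2 (\<lambda>(a,b). M $$ (pick {i,j} a, pick {i,j} b))"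
proof -
  have "{a. a < n \<and> a \<in> {i,j}} = {i,j}" using assms by auto
  then show ?thesis
    unfolding submatrix_def using assms by (simp add: numeral_2_eq_2)
qed

lemma submatrix_triple:
  assumes "M \<in> carrier_mat n n" "i < j" "j < k" "k < n"
  shows "submatrix M {i,j,k} {i,j,k} = mat 3 3 (\<lambda>(a,b). M $$ (pick {i,j,k} a, pick {i,j,k} b))"
proof -
  have "{a. a < n \<and> a \<in> {i,j,k}} = {i,j,k}" using assms by auto
  then show ?thesis
    unfolding submatrix_def using assms by (simp add: numeral_3_eq_3)
qed

lemma det_submatrix_pair:
  assumes "M \<in> carrier_mat n n" "i < j" "j < n"
  shows "det (submatrix M {i,j} {i,j}) = M $$ (i,i) * M $$ (j,j) - M $$ (i,j) * M $$ (j,i)"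
  by (simp add: submatrix_pair[OF assms] det_mat_2 pick_pair[OF assms(2)] del: pick.simps)

lemma det_submatrix_triple:
  assumes "M \<in> carrier_mat n n" "i < j" "j < k" "k < n"
  shows "det (submatrix M {i,j,k} {i,j,k}) =
    M $$ (i,i) * M $$ (j,j) * M $$ (k,k) - M $$ (i,i) * M $$ (j,k) * M $$ (k,j)
    - M $$ (j,i) * M $$ (i,j) * M $$ (k,k) + M $$ (j,i) * M $$ (i,k) * M $$ (k,j)
    + M $$ (k,i) * M $$ (i,j) * M $$ (j,k) - M $$ (k,i) * M $$ (i,k) * M $$ (j,j)"
  by (simp add: submatrix_triple[OF assms] det_mat_3 pick_triple[OF assms(2,3)] numeral_2_eq_2 del: pick.simps)

lemma gen_tournament_carrier: "gen_tournament n M \<Longrightarrow> M \<in> carrier_mat n n"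
  unfolding gen_tournament_def by simp

lemma gen_tournament_entry_sum:
  assumes "gen_tournament n M" "i < n" "j < n"
  shows "M $$ (i,j) + M $$ (j,i) = (if i = j then 0 else 1)"
proof -
  have sum: "M + transpose_mat M = mat n n (\<lambda>(i,j). if i = j then 0 else 1)"
    using assms(1) unfolding gen_tournament_def by auto
  have "(M + transpose_mat M) $$ (i,j) = M $$ (i,j) + M $$ (j,i)"
    using gen_tournament_carrier[OF assms(1)] assms(2,3) by auto
  then show ?thesis
    using sum assms(2,3) by simp
qed

lemma gen_tournament_diag: "gen_tournament n M \<Longrightarrow> i < n \<Longrightarrow> M $$ (i,i) = 0"
  using gen_tournament_entry_sum[of n M i i] by simp

lemma gen_tournament_converse:
  "gen_tournament n M \<Longrightarrow> i < n \<Longrightarrow> j < n \<Longrightarrow> i \<noteq> j \<Longrightarrow> M $$ (j,i) = 1 - M $$ (i,j)"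
  using gen_tournament_entry_sum[of n M i j] by simp

lemma principal_minor_pair:
  assumes "gen_tournament n M" "i < n" "j < n" "i \<noteq> j"
  shows "principal_minor M {i,j} = - M $$ (i,j) * M $$ (j,i)"
proof -
  have sorted: "principal_minor M {a,b} = - M $$ (a,b) * M $$ (b,a)" if "a < b" "b < n" for a b
    using det_submatrix_pair[OF gen_tournament_carrier[OF assms(1)] that] that
    by (simp add: principal_minor_def gen_tournament_diag[OF assms(1)])
  show ?thesis
  proof (cases "i < j")
    case False
    then show ?thesis
      using assms sorted[of j i] by (simp add: insert_commute mult.commute)
  qed (use assms sorted in simp)
qed

lemma principal_minor_triple:
  assumes "gen_tournament n M" "i < n" "j < n" "k < n" "i \<noteq> j" "j \<noteq> k" "i \<noteq> k"
  shows "principal_minor M {i,j,k} =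
    M $$ (i,j) * M $$ (j,k) * M $$ (k,i) + M $$ (i,k) * M $$ (k,j) * M $$ (j,i)"
proof -
  have sorted: "principal_minor M {a,b,d} =
      M $$ (a,b) * M $$ (b,d) * M $$ (d,a) + M $$ (a,d) * M $$ (d,b) * M $$ (b,a)"
    if "a < b" "b < d" "d < n" for a b d
    using det_submatrix_triple[OF gen_tournament_carrier[OF assms(1)] that] that
    by (simp add: principal_minor_def gen_tournament_diag[OF assms(1)] algebra_simps)
  consider "i < j" "j < k" | "i < k" "k < j" | "j < i" "i < k" | "j < k" "k < i" | "k < i" "i < j"
    | "k < j" "j < i"
    using assms by linarith
  then show ?thesis
  proof cases
    case 1 then show ?thesis using sorted[of i j k] assms by simp
  next
    case 2 then show ?thesis using sorted[of i k j] assms by (simp add: insert_commute algebra_simps)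
  next
    case 3 then show ?thesis using sorted[of j i k] assms by (simp add: insert_commute algebra_simps)
  next
    case 4 then show ?thesis using sorted[of j k i] assms by (simp add: insert_commute algebra_simps)
  next
    case 5 then show ?thesis using sorted[of k i j] assms by (simp add: insert_commute algebra_simps)
  next
    case 6 then show ?thesis using sorted[of k j i] assms by (simp add: insert_commute algebra_simps)
  qed
qed

lemma pair_minor_entry_cases:
  assumes A: "gen_tournament n A" and B: "gen_tournament n B"
    and ij: "i < n" "j < n" "i \<noteq> j"
    and minor: "principal_minor A {i,j} = principal_minor B {i,j}"
  shows "B $$ (i,j) = A $$ (i,j) \<or> B $$ (i,j) = 1 - A $$ (i,j)"
proof -
  have "A $$ (i,j) * (1 - A $$ (i,j)) = B $$ (i,j) * (1 - B $$ (i,j))"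
    using minor principal_minor_pair[OF A ij] principal_minor_pair[OF B ij]
      gen_tournament_converse[OF A ij] gen_tournament_converse[OF B ij] by simp
  then have "(B $$ (i,j) - A $$ (i,j)) * (B $$ (i,j) - (1 - A $$ (i,j))) = 0"
    by (simp add: algebra_simps)
  then show ?thesis by simp
qed

lemma triple_minor_forces_entry:
  assumes A: "gen_tournament n A" and B: "gen_tournament n B"
    and ijk: "i < n" "j < n" "k < n" "i \<noteq> j" "j \<noteq> k" "i \<noteq> k"
    and minor: "principal_minor A {i,j,k} = principal_minor B {i,j,k}"
    and A_row: "A $$ (i,j) = c" "A $$ (i,k) = c"
    and B_row: "B $$ (i,j) = c" "B $$ (i,k) = 1 - c"
    and c: "c \<noteq> 1 - c"
  shows "B $$ (j,k) = 1 - c"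
proof -
  have conv: "M $$ (j,i) = 1 - M $$ (i,j)" "M $$ (k,i) = 1 - M $$ (i,k)" "M $$ (k,j) = 1 - M $$ (j,k)"
    if "gen_tournament n M" for M
    using gen_tournament_converse[OF that, of i j] gen_tournament_converse[OF that, of i k]
      gen_tournament_converse[OF that, of j k] ijk by simp_all
  have "principal_minor A {i,j,k} = c * (1 - c)"
    using principal_minor_triple[OF A ijk] conv[OF A] A_row by (simp add: algebra_simps)
  moreover have "principal_minor B {i,j,k} = c * c * B $$ (j,k) + (1 - c) * (1 - c) * (1 - B $$ (j,k))"
    using principal_minor_triple[OF B ijk] conv[OF B] B_row by (simp add: algebra_simps)
  ultimately have "(2 * c - 1) * (B $$ (j,k) - (1 - c)) = 0"
    using minor by (simp add: algebra_simps)
  then show ?thesis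
    using c by simp
qed

definition constant_cut :: "nat \<Rightarrow> real mat \<Rightarrow> nat set \<Rightarrow> real \<Rightarrow> bool" where
  "constant_cut n M X c \<longleftrightarrow> X \<noteq> {} \<and> X \<subset> {0..<n} \<and> (\<forall>x\<in>X. \<forall>y\<in>{0..<n} - X. M $$ (x,y) = c)"

lemma separable_iff_constant_cut:
  assumes M: "gen_tournament n M"
  shows "separable n M \<longleftrightarrow> (\<exists>X c. constant_cut n M X c)"
proof
  assume "separable n M"
  then obtain X Y where XY: "X \<noteq> {}" "Y \<noteq> {}" "X \<inter> Y = {}" "X \<union> Y = {0..<n}"
    and clans: "clan n M X" "clan n M Y"
    unfolding separable_def by blast
  obtain x0 y0 where x0: "x0 \<in> X" and y0: "y0 \<in> Y"
    using XY by blast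
  have "M $$ (x,y) = M $$ (x0,y0)" if "x \<in> X" "y \<in> Y" for x y
  proof -
    have "M $$ (x,y) = M $$ (x0,y)"
      using clans(1) that x0 XY unfolding clan_def by blast
    also have "\<dots> = M $$ (x0,y0)"
      using clans(2) that x0 y0 XY unfolding clan_def by blast
    finally show ?thesis .
  qed
  moreover have "Y = {0..<n} - X"
    using XY by blast
  ultimately have "constant_cut n M X (M $$ (x0,y0))"
    using XY unfolding constant_cut_def by blast
  then show "\<exists>X c. constant_cut n M X c" by blast
next
  assume "\<exists>X c. constant_cut n M X c"
  then obtain X c where cut: "constant_cut n M X c" by blast
  let ?Y = "{0..<n} - X"
  have reverse: "M $$ (y,x) = 1 - c" if "x \<in> X" "y \<in> ?Y" for x y
    using cut gen_tournament_converse[OF M, of x y] that unfolding constant_cut_def by force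
  have "clan n M X" "clan n M ?Y"
    using cut reverse unfolding constant_cut_def clan_def by auto
  moreover have "X \<noteq> {}" "?Y \<noteq> {}" "X \<union> ?Y = {0..<n}"
    using cut unfolding constant_cut_def by auto
  ultimately show "separable n M"
    unfolding separable_def by (intro exI[of _ X] exI[of _ ?Y]) auto
qed

text \<open>The constraints that equal minors of order at most 3 impose on B when A is
  constantly c from X to Y.\<close>
locale cut_pattern =
  fixes n :: nat and B :: "real mat" and X Y :: "nat set" and c :: real
  assumes tournament: "gen_tournament n B"
    and partition: "X \<noteq> {}" "Y \<noteq> {}" "X \<inter> Y = {}" "X \<union> Y = {0..<n}"
    and cross_values: "\<lbrakk>x \<in> X; y \<in> Y\<rbrakk> \<Longrightarrow> B $$ (x,y) = c \<or> B $$ (x,y) = 1 - c"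
    and switch_in_Y: "\<lbrakk>x \<in> X; y \<in> Y; y' \<in> Y; B $$ (x,y) = c; B $$ (x,y') \<noteq> c\<rbrakk> \<Longrightarrow> B $$ (y,y') = 1 - c"
    and switch_in_X: "\<lbrakk>x \<in> X; x' \<in> X; y \<in> Y; B $$ (x,y) = c; B $$ (x',y) \<noteq> c\<rbrakk> \<Longrightarrow> B $$ (x,x') = c"
begin

lemma entry_converse: "u \<in> X \<union> Y \<Longrightarrow> v \<in> X \<union> Y \<Longrightarrow> u \<noteq> v \<Longrightarrow> B $$ (v,u) = 1 - B $$ (u,v)"
  using partition(4) by (intro gen_tournament_converse[OF tournament]) auto

lemma separable_if_full_row:
  assumes "x0 \<in> X" "\<forall>y\<in>Y. B $$ (x0,y) = c"
  shows "separable n B"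
proof -
  define P where "P = {x\<in>X. \<forall>y\<in>Y. B $$ (x,y) = c}"
  have "constant_cut n B P c"
    unfolding constant_cut_def
  proof (intro conjI ballI)
    show "P \<noteq> {}" "P \<subset> {0..<n}"
      using assms partition unfolding P_def by auto
    fix p q assume p: "p \<in> P" and q: "q \<in> {0..<n} - P"
    show "B $$ (p,q) = c"
    proof (cases "q \<in> Y")
      case True
      then show ?thesis using p unfolding P_def by auto
    next
      case False
      with q partition have "q \<in> X" by auto
      with q obtain y where "y \<in> Y" "B $$ (q,y) \<noteq> c"
        unfolding P_def by auto
      then show ?thesis
        using switch_in_X[of p q y] p \<open>q \<in> X\<close> unfolding P_def by auto
    qed
  qed
  then show ?thesis
    using separable_iff_constant_cut[OF tournament] by blast
qed

lemma separable_if_avoided_column: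
  assumes "y0 \<in> Y" "\<forall>x\<in>X. B $$ (x,y0) \<noteq> c"
  shows "separable n B"
proof -
  define P where "P = {y\<in>Y. \<forall>x\<in>X. B $$ (x,y) \<noteq> c}"
  have "constant_cut n B P c"
    unfolding constant_cut_def
  proof (intro conjI ballI)
    show "P \<noteq> {}" "P \<subset> {0..<n}"
      using assms partition unfolding P_def by auto
    fix p q assume p: "p \<in> P" and q: "q \<in> {0..<n} - P"
    then have "p \<in> Y" "p \<noteq> q"
      unfolding P_def by auto
    have "B $$ (q,p) = 1 - c"
    proof (cases "q \<in> X")
      case True
      then show ?thesis using p cross_values[of q p] unfolding P_def by auto
    next
      case False
      with q partition have "q \<in> Y" by auto
      with q obtain x where "x \<in> X" "B $$ (x,q) = c"
        unfolding P_def by auto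
      then show ?thesis
        using switch_in_Y[of x q p] p \<open>q \<in> Y\<close> unfolding P_def by auto
    qed
    moreover have "q \<in> X \<union> Y"
      using q partition(4) by blast
    ultimately show "B $$ (p,q) = c"
      using entry_converse[of q p] \<open>p \<in> Y\<close> \<open>p \<noteq> q\<close> by simp
  qed
  then show ?thesis
    using separable_iff_constant_cut[OF tournament] by blast
qed

lemma full_row_if_columns_hit:
  assumes hit: "\<forall>y\<in>Y. \<exists>x\<in>X. B $$ (x,y) = c"
  shows "\<exists>x\<in>X. \<forall>y\<in>Y. B $$ (x,y) = c"
proof (cases "c = 1 - c")
  case True
  then have "B $$ (x,y) = c" if "x \<in> X" "y \<in> Y" for x y
    using cross_values[OF that] by metis
  then show ?thesis
    using partition(1) by blast
next
  case False
  define N where "N x = {y\<in>Y. B $$ (x,y) = c}" for x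
  have chain: "N x \<subseteq> N x' \<or> N x' \<subseteq> N x" if "x \<in> X" "x' \<in> X" for x x'
  proof (rule ccontr)
    assume "\<not> (N x \<subseteq> N x' \<or> N x' \<subseteq> N x)"
    then obtain y y' where y: "y \<in> N x" "y \<notin> N x'" and y': "y' \<in> N x'" "y' \<notin> N x"
      by auto
    then have "B $$ (y,y') = 1 - c" "B $$ (y',y) = 1 - c" "y \<noteq> y'"
      using switch_in_Y[of x y y'] switch_in_Y[of x' y' y] that unfolding N_def by auto
    then show False
      using entry_converse[of y y'] False y y' unfolding N_def by auto
  qed
  have "finite X"
    using partition(4) by (metis finite_Un finite_atLeastLessThan)
  then have "\<Union>(N ` X) \<in> N ` X"
    using partition(1) chain by (intro Union_in_chain) (auto simp: subset.chain_def)
  moreover have "\<Union>(N ` X) = Y"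
    using hit unfolding N_def by auto
  ultimately obtain x where "x \<in> X" "N x = Y"
    by auto
  then show ?thesis
    unfolding N_def by auto
qed

theorem separable: "separable n B"
proof (cases "\<exists>y\<in>Y. \<forall>x\<in>X. B $$ (x,y) \<noteq> c")
  case True
  then show ?thesis using separable_if_avoided_column by blast
next
  case False
  then obtain x where "x \<in> X" "\<forall>y\<in>Y. B $$ (x,y) = c"
    using full_row_if_columns_hit by blast
  then show ?thesis using separable_if_full_row by blast
qed

end

lemma separable_transfer:
  assumes A: "gen_tournament n A" and B: "gen_tournament n B"
    and minors: "\<And>S. S \<subseteq> {0..<n} \<Longrightarrow> card S \<le> 3 \<Longrightarrow> principal_minor A S = principal_minor B S"
    and "separable n A"
  shows "separable n B"
proof -
  obtain X c where cut: "constant_cut n A X c"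
    using separable_iff_constant_cut[OF A] assms(4) by blast
  define Y where "Y = {0..<n} - X"
  have XY: "X \<noteq> {}" "Y \<noteq> {}" "X \<inter> Y = {}" "X \<union> Y = {0..<n}"
    using cut unfolding constant_cut_def Y_def by auto
  have index: "u < n" if "u \<in> X \<union> Y" for u
    using that XY(4) by auto
  have A_cross: "A $$ (x,y) = c" "A $$ (y,x) = 1 - c" if "x \<in> X" "y \<in> Y" for x y
  proof -
    show "A $$ (x,y) = c"
      using cut that unfolding constant_cut_def Y_def by blast
    then show "A $$ (y,x) = 1 - c"
      using gen_tournament_converse[OF A, of x y] index that XY(3) by auto
  qed
  have minor: "principal_minor A S = principal_minor B S" if "S \<subseteq> X \<union> Y" "card S \<le> 3" for S
    using minors XY(4) that by simp
  have pair_minor: "principal_minor A {u,v} = principal_minor B {u,v}"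
    if "u \<in> X \<union> Y" "v \<in> X \<union> Y" for u v
    using that by (intro minor) (auto simp: card_insert_if)
  have triple_minor: "principal_minor A {u,v,w} = principal_minor B {u,v,w}"
    if "u \<in> X \<union> Y" "v \<in> X \<union> Y" "w \<in> X \<union> Y" for u v w
    using that by (intro minor) (auto simp: card_insert_if)
  have B_cross: "B $$ (x,y) = c \<or> B $$ (x,y) = 1 - c" if "x \<in> X" "y \<in> Y" for x y
    using pair_minor_entry_cases[OF A B, of x y] pair_minor[of x y] A_cross that index XY(3) by blast
  interpret cut_pattern n B X Y c
  proof
    show "B $$ (x,y) = c \<or> B $$ (x,y) = 1 - c" if "x \<in> X" "y \<in> Y" for x y
      using B_cross that .
  next
    fix x y y' assume xy: "x \<in> X" "y \<in> Y" "y' \<in> Y" and row: "B $$ (x,y) = c" "B $$ (x,y') \<noteq> c"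
    then have "B $$ (x,y') = 1 - c" "c \<noteq> 1 - c" "y \<noteq> y'" "x \<noteq> y" "x \<noteq> y'"
      using B_cross[of x y'] XY(3) by auto
    then show "B $$ (y,y') = 1 - c"
      using triple_minor_forces_entry[OF A B, of x y y' c] triple_minor[of x y y'] A_cross xy row index
      by auto
  next
    fix x x' y assume xy: "x \<in> X" "x' \<in> X" "y \<in> Y" and column: "B $$ (x,y) = c" "B $$ (x',y) \<noteq> c"
    then have "B $$ (x',y) = 1 - c" "c \<noteq> 1 - c" "x \<noteq> x'" "x \<noteq> y" "x' \<noteq> y"
      using B_cross[of x' y] XY(3) by auto
    moreover have "B $$ (y,x) = 1 - c" "B $$ (y,x') = c"
      using calculation gen_tournament_converse[OF B, of x y] gen_tournament_converse[OF B, of x' y]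
        xy column index by auto
    ultimately show "B $$ (x,x') = c"
      using triple_minor_forces_entry[OF A B, of y x x' "1 - c"] triple_minor[of y x x'] A_cross xy index
      by auto
  qed (use B XY in auto)
  show ?thesis
    by (rule separable)
qed

theorem proposition5p5:
  fixes n :: nat and A B :: "real mat"
  assumes "gen_tournament n A" and "gen_tournament n B"
    and "\<And>S. S \<subseteq> {0..<n} \<Longrightarrow> card S \<le> 4 \<Longrightarrow> principal_minor A S = principal_minor B S"
  shows "inseparable n A \<longleftrightarrow> inseparable n B"
proof -
  have "principal_minor A S = principal_minor B S" if "S \<subseteq> {0..<n}" "card S \<le> 3" for S
    using assms(3) that by simp
  then show ?thesis
    unfolding inseparable_def
    using separable_transfer[OF assms(1,2)] separable_transfer[OF assms(2,1)] by metis
qed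
end
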